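(* Let $\Gamma=\langle x,y,z\mid xy^{-1}=zx^{-1},\ yz^{-1}=zy^{-1}\rangle$ with generating set $\Delta=\{x,y,z\}$. Then $W=W_xU_x+W_yU_y+W_zU_z$ is a homogeneous scalar quantum walk on $C_\Delta(\Gamma)$ if and only if, up to a global phase, $W_x=\cos\phi$, $W_y=\frac{1+i(-1)^q}{2}\sin\phi$, $W_z=-\frac{1-i(-1)^q}{2}\sin\phi$ for some real $\phi$ and some integer $q$ (with these values nonzero). In particular such a walk exists.
   Context: The Cayley graph $C_\Delta(\Gamma)$ has vertex set $\Gamma$ and directed edges $(g,g\delta)$, $g\in\Gamma,\delta\in\Delta$. Let $\ell^2(\Gamma)$ have orthonormal basis $\{|g\rangle\}_{g\in\Gamma}$ and for $\delta\in\Gamma$ let $U_\delta|g\rangle=|g\delta\rangle$. A homogeneous scalar quantum walk on $C_\Delta(\Gamma)$ is a unitary operator $W=\sum_{\delta\in\Delta}W_\delta U_\delta$ with all complex coefficients $W_\delta$ nonzero. "Up to a global phase" means that all coefficients may be multiplied by a common complex number of modulus one. *)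

theory Defs
  imports "HOL-Analysis.Analysis" "HOL-Algebra.Group"
begin

datatype gen = GX | GY | GZ

text \<open>Letters of words in the free group: (a, False) is a, (a, True) is a inverse.\<close>
type_synonym letter = "gen \<times> bool"

definition flip_letter :: "letter \<Rightarrow> letter" where
  "flip_letter l = (fst l, \<not> snd l)"

definition eval_letter :: "('a, 'b) monoid_scheme \<Rightarrow> (gen \<Rightarrow> 'a) \<Rightarrow> letter \<Rightarrow> 'a" where
  "eval_letter G v l = (if snd l then inv\<^bsub>G\<^esub> (v (fst l)) else v (fst l))"

definition eval_word :: "('a, 'b) monoid_scheme \<Rightarrow> (gen \<Rightarrow> 'a) \<Rightarrow> letter list \<Rightarrow> 'a" where
  "eval_word G v w = foldr (\<lambda>l acc. eval_letter G v l \<otimes>\<^bsub>G\<^esub> acc) w \<one>\<^bsub>G\<^esub>"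

text \<open>Relators of Gamma: x y^-1 = z x^-1 gives x y^-1 x z^-1, and y z^-1 = z y^-1 gives y z^-1 y z^-1.\<close>
definition relators :: "letter list set" where
  "relators = {[(GX,False),(GY,True),(GX,False),(GZ,True)],
               [(GY,False),(GZ,True),(GY,False),(GZ,True)]}"

inductive red_step :: "letter list \<Rightarrow> letter list \<Rightarrow> bool" where
  cancel: "red_step (u @ [l, flip_letter l] @ w) (u @ w)"
| rel: "r \<in> relators \<Longrightarrow> red_step (u @ r @ w) (u @ w)"

definition word_equiv :: "letter list \<Rightarrow> letter list \<Rightarrow> bool" where
  "word_equiv = (sup red_step red_step\<inverse>\<inverse>)\<^sup>*\<^sup>*"

definition presents :: "('a, 'b) monoid_scheme \<Rightarrow> (gen \<Rightarrow> 'a) \<Rightarrow> bool" where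
  "presents G v \<longleftrightarrow> group G \<and> (\<forall>a. v a \<in> carrier G)
     \<and> carrier G = range (eval_word G v)
     \<and> (\<forall>w w'. eval_word G v w = eval_word G v w' \<longleftrightarrow> word_equiv w w')"

definition in_l2 :: "('a, 'b) monoid_scheme \<Rightarrow> ('a \<Rightarrow> complex) \<Rightarrow> bool" where
  "in_l2 G f \<longleftrightarrow> (\<forall>h. h \<notin> carrier G \<longrightarrow> f h = 0)
     \<and> (\<lambda>h. (cmod (f h))\<^sup>2) summable_on carrier G"

definition l2_norm :: "('a, 'b) monoid_scheme \<Rightarrow> ('a \<Rightarrow> complex) \<Rightarrow> real" where
  "l2_norm G f = sqrt (infsum (\<lambda>h. (cmod (f h))\<^sup>2) (carrier G))"

text \<open>U_d |g> = |g d>, i.e. (U_d f)(h) = f(h d^-1).\<close>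
definition shift_op :: "('a, 'b) monoid_scheme \<Rightarrow> 'a \<Rightarrow> ('a \<Rightarrow> complex) \<Rightarrow> ('a \<Rightarrow> complex)" where
  "shift_op G d f = (\<lambda>h. if h \<in> carrier G then f (h \<otimes>\<^bsub>G\<^esub> inv\<^bsub>G\<^esub> d) else 0)"

definition walk_op :: "('a, 'b) monoid_scheme \<Rightarrow> (gen \<Rightarrow> 'a) \<Rightarrow> (gen \<Rightarrow> complex)
    \<Rightarrow> ('a \<Rightarrow> complex) \<Rightarrow> ('a \<Rightarrow> complex)" where
  "walk_op G v c f = (\<lambda>h. c GX * shift_op G (v GX) f h + c GY * shift_op G (v GY) f h
                           + c GZ * shift_op G (v GZ) f h)"

text \<open>Unitary operator on ell^2: a norm-preserving map of ell^2 onto ell^2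
  (the operator is linear by construction).\<close>
definition unitary_l2 :: "('a, 'b) monoid_scheme \<Rightarrow> (('a \<Rightarrow> complex) \<Rightarrow> ('a \<Rightarrow> complex)) \<Rightarrow> bool" where
  "unitary_l2 G T \<longleftrightarrow> (\<forall>f. in_l2 G f \<longrightarrow> in_l2 G (T f) \<and> l2_norm G (T f) = l2_norm G f)
     \<and> (\<forall>g. in_l2 G g \<longrightarrow> (\<exists>f. in_l2 G f \<and> T f = g))"

definition homog_scalar_qw :: "('a, 'b) monoid_scheme \<Rightarrow> (gen \<Rightarrow> 'a) \<Rightarrow> (gen \<Rightarrow> complex) \<Rightarrow> bool" where
  "homog_scalar_qw G v c \<longleftrightarrow> (\<forall>d. c d \<noteq> 0) \<and> unitary_l2 G (walk_op G v c)"

end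

theory Submission
  imports Defs
begin

text \<open>
  For W = sum_d c_d U_d one has |W f|^2 = Re sum_{d,d'} c_d cnj(c_d') P_f(d d'^-1), where
  P_f(g) = sum_k f(k) cnj(f(k g)) is the autocorrelation of f. The relations identify the
  right quotients in pairs, z x^-1 = x y^-1, x z^-1 = y x^-1 and z y^-1 = y z^-1, so only
  P_f at 1, a = x y^-1, a^-1 and e = y z^-1 occurs, and these four elements are distinct.
  Testing with f = delta_1 + t delta_a and f = delta_1 + delta_e shows that W is an isometry
  iff |c_x|^2 + |c_y|^2 + |c_z|^2 = 1, c_x cnj(c_y) + c_z cnj(c_x) = 0 and
  Re (c_y cnj(c_z)) = 0. The left quotients d^-1 d' are identified in the same pattern, so
  these conditions also give W W* = 1, hence surjectivity. After a global phase making c_x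
  positive, the conditions force c_z = - cnj(c_y) and Im c_y = +-Re c_y, which is the stated
  parametrisation.
\<close>

(* Both relators have weight 0 mod 4, so the weight mod 4 is invariant under word_equiv;
   it separates 1, x y^-1, y x^-1, y z^-1 (weights 0, 3, 1, 2). *)
fun gen_weight :: "gen \<Rightarrow> int" where
  "gen_weight GX = 1" | "gen_weight GY = 2" | "gen_weight GZ = 0"

definition letter_weight :: "letter \<Rightarrow> int" where
  "letter_weight l = (if snd l then - gen_weight (fst l) else gen_weight (fst l))"

definition word_weight :: "letter list \<Rightarrow> int" where
  "word_weight w = sum_list (map letter_weight w)"

lemma word_weight_append [simp]: "word_weight (u @ w) = word_weight u + word_weight w"
  by (simp add: word_weight_def)

lemma red_step_word_weight_mod4:
  assumes "red_step w w'"
  shows "word_weight w mod 4 = word_weight w' mod 4"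
  using assms
proof (induction rule: red_step.induct)
  case (cancel u l w)
  have "letter_weight (flip_letter l) = - letter_weight l"
    by (simp add: letter_weight_def flip_letter_def)
  then show ?case
    by (simp add: word_weight_def)
next
  case (rel r u w)
  then have "4 dvd word_weight r"
    by (auto simp: relators_def word_weight_def letter_weight_def)
  then obtain k where "word_weight r = 4 * k"
    by (rule dvdE)
  then have "word_weight (u @ r @ w) = word_weight (u @ w) + k * 4"
    by (simp add: algebra_simps)
  then show ?case
    by (simp only: mod_mult_self1)
qed

lemma word_equiv_word_weight_mod4:
  assumes "word_equiv w w'"
  shows "word_weight w mod 4 = word_weight w' mod 4"
  using assms unfolding word_equiv_def
  by (induction rule: rtranclp_induct) (auto dest: red_step_word_weight_mod4)

lemma UNIV_gen: "UNIV = {GX, GY, GZ}"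
  using gen.exhaust by auto

lemma finite_UNIV_gen [simp]: "finite (UNIV :: gen set)"
  by (simp add: UNIV_gen)

lemma all_gen: "(\<forall>d. P d) \<longleftrightarrow> P GX \<and> P GY \<and> P GZ"
  by (metis gen.exhaust)

lemma has_sum_finite_sum:
  fixes f :: "'i \<Rightarrow> 'a \<Rightarrow> 'b::topological_comm_monoid_add"
  assumes "finite I" and "\<And>i. i \<in> I \<Longrightarrow> (f i has_sum s i) A"
  shows "((\<lambda>x. \<Sum>i\<in>I. f i x) has_sum (\<Sum>i\<in>I. s i)) A"
  using assms by (induction I rule: finite_induct) (auto intro: has_sum_add)

lemma summable_on_mult_cnj:
  fixes f g :: "'a \<Rightarrow> complex"
  assumes "(\<lambda>x. (cmod (f x))\<^sup>2) summable_on A" and "(\<lambda>x. (cmod (g x))\<^sup>2) summable_on A"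
  shows "(\<lambda>x. f x * cnj (g x)) summable_on A"
proof -
  have "cmod (f x * cnj (g x)) \<le> (cmod (f x))\<^sup>2 + (cmod (g x))\<^sup>2" for x
  proof -
    have "2 * cmod (f x) * cmod (g x) \<le> (cmod (f x))\<^sup>2 + (cmod (g x))\<^sup>2"
      by (rule sum_squares_bound)
    moreover have "0 \<le> cmod (f x) * cmod (g x)"
      by simp
    ultimately show ?thesis
      unfolding norm_mult complex_mod_cnj by linarith
  qed
  then have "(\<lambda>x. cmod (f x * cnj (g x))) summable_on A"
    by (intro summable_on_comparison_test[OF summable_on_add[OF assms]]) auto
  then show ?thesis
    using summable_on_iff_abs_summable_on_complex by blast
qed

definition autocorr :: "('a, 'b) monoid_scheme \<Rightarrow> ('a \<Rightarrow> complex) \<Rightarrow> 'a \<Rightarrow> complex" where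
  "autocorr G f g = (\<Sum>\<^sub>\<infinity>k\<in>carrier G. f k * cnj (f (k \<otimes>\<^bsub>G\<^esub> g)))"

definition translate_sum ::
    "('a, 'b) monoid_scheme \<Rightarrow> 'i set \<Rightarrow> ('i \<Rightarrow> complex) \<Rightarrow> ('i \<Rightarrow> 'a) \<Rightarrow> ('a \<Rightarrow> complex) \<Rightarrow> 'a \<Rightarrow> complex"
  where "translate_sum G I \<alpha> s f h =
    (if h \<in> carrier G then \<Sum>i\<in>I. \<alpha> i * f (h \<otimes>\<^bsub>G\<^esub> s i) else 0)"

definition two_point_fun :: "('a, 'b) monoid_scheme \<Rightarrow> 'a \<Rightarrow> complex \<Rightarrow> 'a \<Rightarrow> complex" where
  "two_point_fun G g t h = (if h = \<one>\<^bsub>G\<^esub> then 1 else if h = g then t else 0)"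

context group
begin

lemma bij_betw_mult_right: "a \<in> carrier G \<Longrightarrow> bij_betw (\<lambda>h. h \<otimes> a) (carrier G) (carrier G)"
  by (rule bij_betwI[where g = "\<lambda>h. h \<otimes> inv a"]) (auto simp: m_assoc)

lemma has_sum_translate_autocorr:
  assumes "a \<in> carrier G" "b \<in> carrier G" "(\<lambda>h. (cmod (f h))\<^sup>2) summable_on carrier G"
  shows "((\<lambda>h. f (h \<otimes> a) * cnj (f (h \<otimes> b))) has_sum autocorr G f (inv a \<otimes> b)) (carrier G)"
proof -
  let ?F = "\<lambda>k. f k * cnj (f (k \<otimes> (inv a \<otimes> b)))"
  have "(\<lambda>h. (cmod (f (h \<otimes> (inv a \<otimes> b))))\<^sup>2) summable_on carrier G"
    using summable_on_reindex_bij_betw[OF bij_betw_mult_right[of "inv a \<otimes> b"],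
        where f = "\<lambda>h. (cmod (f h))\<^sup>2"] assms
    by simp
  then have "?F summable_on carrier G"
    using assms(3) by (rule summable_on_mult_cnj[rotated])
  then have "(?F has_sum autocorr G f (inv a \<otimes> b)) (carrier G)"
    by (simp add: autocorr_def)
  then have "((\<lambda>h. ?F (h \<otimes> a)) has_sum autocorr G f (inv a \<otimes> b)) (carrier G)"
    using has_sum_reindex_bij_betw[OF bij_betw_mult_right[OF assms(1)], of ?F] by simp
  moreover have "?F (h \<otimes> a) = f (h \<otimes> a) * cnj (f (h \<otimes> b))" if "h \<in> carrier G" for h
    using assms that by (simp add: m_assoc [symmetric]) (simp add: m_assoc)
  ultimately show ?thesis
    by (rule has_sum_cong [THEN iffD1, rotated])
qed

lemma has_sum_norm_translate_sum:
  assumes "finite I" and "s ` I \<subseteq> carrier G" and "(\<lambda>h. (cmod (f h))\<^sup>2) summable_on carrier G"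
  shows "((\<lambda>h. (cmod (translate_sum G I \<alpha> s f h))\<^sup>2) has_sum
    Re (\<Sum>i\<in>I. \<Sum>j\<in>I. \<alpha> i * cnj (\<alpha> j) * autocorr G f (inv (s i) \<otimes> s j))) (carrier G)"
proof -
  let ?Q = "\<Sum>i\<in>I. \<Sum>j\<in>I. \<alpha> i * cnj (\<alpha> j) * autocorr G f (inv (s i) \<otimes> s j)"
  have "((\<lambda>h. \<Sum>i\<in>I. \<Sum>j\<in>I. \<alpha> i * cnj (\<alpha> j) * (f (h \<otimes> s i) * cnj (f (h \<otimes> s j))))
      has_sum ?Q) (carrier G)"
    using assms by (intro has_sum_finite_sum has_sum_cmult_right has_sum_translate_autocorr) auto
  moreover have "(\<Sum>i\<in>I. \<Sum>j\<in>I. \<alpha> i * cnj (\<alpha> j) * (f (h \<otimes> s i) * cnj (f (h \<otimes> s j))))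
      = of_real ((cmod (translate_sum G I \<alpha> s f h))\<^sup>2)" if "h \<in> carrier G" for h
    using that unfolding translate_sum_def complex_norm_square cnj_sum
    by (simp add: sum_product ac_simps)
  ultimately have "((\<lambda>h. of_real ((cmod (translate_sum G I \<alpha> s f h))\<^sup>2) :: complex) has_sum ?Q)
      (carrier G)"
    by (rule has_sum_cong [THEN iffD1, rotated])
  from has_sum_Re[OF this] show ?thesis
    by simp
qed

lemma in_l2_translate_sum:
  assumes "finite I" and "s ` I \<subseteq> carrier G" and "in_l2 G f"
  shows "in_l2 G (translate_sum G I \<alpha> s f)"
  unfolding in_l2_def
proof
  show "\<forall>h. h \<notin> carrier G \<longrightarrow> translate_sum G I \<alpha> s f h = 0"
    by (simp add: translate_sum_def)
  show "(\<lambda>h. (cmod (translate_sum G I \<alpha> s f h))\<^sup>2) summable_on carrier G"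
    using assms by (intro has_sum_imp_summable[OF has_sum_norm_translate_sum]) (auto simp: in_l2_def)
qed

lemma l2_norm_eq_autocorr:
  assumes "in_l2 G f"
  shows "l2_norm G f = sqrt (Re (autocorr G f \<one>))"
proof -
  have "autocorr G f \<one> = (\<Sum>\<^sub>\<infinity>h\<in>carrier G. of_real ((cmod (f h))\<^sup>2))"
    unfolding autocorr_def complex_norm_square by (rule infsum_cong) simp
  also have "\<dots> = of_real (\<Sum>\<^sub>\<infinity>h\<in>carrier G. (cmod (f h))\<^sup>2)"
    using assms by (intro infsumI has_sum_of_real has_sum_infsum) (simp add: in_l2_def)
  finally show ?thesis
    by (simp add: l2_norm_def)
qed

lemma l2_norm_translate_sum:
  assumes "finite I" and "s ` I \<subseteq> carrier G" and "in_l2 G f"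
  shows "l2_norm G (translate_sum G I \<alpha> s f) =
    sqrt (Re (\<Sum>i\<in>I. \<Sum>j\<in>I. \<alpha> i * cnj (\<alpha> j) * autocorr G f (inv (s i) \<otimes> s j)))"
  using has_sum_norm_translate_sum[OF assms(1,2)] assms(3)
  by (simp add: l2_norm_def in_l2_def infsumI)

lemma translate_sum_translate_sum:
  assumes "h \<in> carrier G" and "s ` I \<subseteq> carrier G" and "t ` J \<subseteq> carrier G"
  shows "translate_sum G I \<alpha> s (translate_sum G J \<beta> t f) h =
    (\<Sum>i\<in>I. \<Sum>j\<in>J. \<alpha> i * \<beta> j * f (h \<otimes> (s i \<otimes> t j)))"
  using assms
  by (auto simp: translate_sum_def sum_distrib_left mult.assoc m_assoc image_subset_iff
      intro!: sum.cong)

lemma in_l2_two_point_fun: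
  assumes "g \<in> carrier G"
  shows "in_l2 G (two_point_fun G g t)"
  unfolding in_l2_def
proof
  show "\<forall>h. h \<notin> carrier G \<longrightarrow> two_point_fun G g t h = 0"
    using assms by (auto simp: two_point_fun_def)
  have "finite {h \<in> carrier G. (cmod (two_point_fun G g t h))\<^sup>2 \<noteq> 0}"
    by (rule finite_subset[of _ "{\<one>, g}"]) (auto simp: two_point_fun_def)
  then show "(\<lambda>h. (cmod (two_point_fun G g t h))\<^sup>2) summable_on carrier G"
    by (rule finite_nonzero_values_imp_summable_on)
qed

lemma autocorr_two_point_fun:
  assumes "g \<in> carrier G" "g \<noteq> \<one>" "h \<in> carrier G"
  shows "autocorr G (two_point_fun G g t) h =
    cnj (two_point_fun G g t h) + t * cnj (two_point_fun G g t (g \<otimes> h))"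
proof -
  let ?f = "two_point_fun G g t"
  have "autocorr G ?f h = (\<Sum>\<^sub>\<infinity>k\<in>{\<one>, g}. ?f k * cnj (?f (k \<otimes> h)))"
    unfolding autocorr_def using assms(1) by (intro infsum_cong_neutral) (auto simp: two_point_fun_def)
  also have "\<dots> = cnj (?f h) + t * cnj (?f (g \<otimes> h))"
    using assms by (simp add: two_point_fun_def)
  finally show ?thesis .
qed

lemma autocorr_form_eq_norm_iff:
  fixes A D :: real and B :: complex
  assumes a: "a \<in> carrier G" and e: "e \<in> carrier G" "e \<otimes> e = \<one>"
    and distinct_elems: "distinct [\<one>, a, inv a, e]"
  shows "(\<forall>f. in_l2 G f \<longrightarrow>
      Re (of_real A * autocorr G f \<one> + B * autocorr G f a + cnj B * autocorr G f (inv a)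
        + of_real D * autocorr G f e) = Re (autocorr G f \<one>))
    \<longleftrightarrow> A = 1 \<and> B = 0 \<and> D = 0"
proof
  assume form: "\<forall>f. in_l2 G f \<longrightarrow>
      Re (of_real A * autocorr G f \<one> + B * autocorr G f a + cnj B * autocorr G f (inv a)
        + of_real D * autocorr G f e) = Re (autocorr G f \<one>)"
  have inv_e: "inv e = e"
    using inv_equality[OF e(2)] e by simp
  have products_ne_one: "a \<otimes> a \<noteq> \<one>" "a \<otimes> e \<noteq> \<one>" "e \<otimes> a \<noteq> \<one>" "e \<otimes> inv a \<noteq> \<one>"
    using inv_equality[of a a] inv_equality[of e a] inv_equality[of a e] inv_equality[of e "inv a"]
      a e distinct_elems inv_e by auto
  have ne: "a \<noteq> \<one>" "inv a \<noteq> \<one>" "e \<noteq> \<one>" "a \<noteq> inv a" "a \<noteq> e" "inv a \<noteq> e"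
    using distinct_elems by auto
  have at_a: "autocorr G (two_point_fun G a t) \<one> = 1 + t * cnj t"
    "autocorr G (two_point_fun G a t) a = cnj t"
    "autocorr G (two_point_fun G a t) (inv a) = t"
    "autocorr G (two_point_fun G a t) e = 0" for t
    using a e ne ne[symmetric] products_ne_one
    by (simp_all add: autocorr_two_point_fun two_point_fun_def)
  have at_e: "autocorr G (two_point_fun G e 1) \<one> = 2"
    "autocorr G (two_point_fun G e 1) a = 0"
    "autocorr G (two_point_fun G e 1) (inv a) = 0"
    "autocorr G (two_point_fun G e 1) e = 2"
    using a e ne ne[symmetric] products_ne_one
    by (simp_all add: autocorr_two_point_fun two_point_fun_def)
  have test_a: "A * (1 + (cmod t)\<^sup>2) + 2 * Re (B * cnj t) = 1 + (cmod t)\<^sup>2" for t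
    using form[rule_format, OF in_l2_two_point_fun[OF a, of t]] unfolding at_a cmod_power2
    by (simp add: power2_eq_square algebra_simps)
  from test_a[of 0] have A: "A = 1"
    by simp
  from test_a[of B] A have "2 * (Re B * Re B) + 2 * (Im B * Im B) = 0"
    by (simp add: cmod_power2 power2_eq_square)
  then have "Re B * Re B + Im B * Im B = 0"
    by linarith
  then have B: "B = 0"
    by (simp add: complex_eq_iff)
  have "A + D = 1"
    using form[rule_format, OF in_l2_two_point_fun[OF e(1), of 1]] unfolding at_e
    by simp
  with A B show "A = 1 \<and> B = 0 \<and> D = 0"
    by simp
qed simp

end

definition unitarity_conditions :: "(gen \<Rightarrow> complex) \<Rightarrow> bool" where
  "unitarity_conditions c \<longleftrightarrow>
    (cmod (c GX))\<^sup>2 + (cmod (c GY))\<^sup>2 + (cmod (c GZ))\<^sup>2 = 1 \<and>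
    c GX * cnj (c GY) + c GZ * cnj (c GX) = 0 \<and> Re (c GY * cnj (c GZ)) = 0"

lemma sum_coeff_pairs_collect:
  fixes F :: "'a \<Rightarrow> complex" and c :: "gen \<Rightarrow> complex"
  assumes "\<And>d. q d d = r"
    and "q GZ GX = q GX GY" and "q GX GZ = q GY GX" and "q GZ GY = q GY GZ"
  shows "(\<Sum>i\<in>UNIV. \<Sum>j\<in>UNIV. c i * cnj (c j) * F (q i j)) =
    of_real ((cmod (c GX))\<^sup>2 + (cmod (c GY))\<^sup>2 + (cmod (c GZ))\<^sup>2) * F r
    + (c GX * cnj (c GY) + c GZ * cnj (c GX)) * F (q GX GY)
    + cnj (c GX * cnj (c GY) + c GZ * cnj (c GX)) * F (q GY GX)
    + of_real (2 * Re (c GY * cnj (c GZ))) * F (q GY GZ)"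
proof -
  have "of_real ((cmod (c GX))\<^sup>2 + (cmod (c GY))\<^sup>2 + (cmod (c GZ))\<^sup>2) =
      c GX * cnj (c GX) + c GY * cnj (c GY) + c GZ * cnj (c GZ)"
    by (simp only: of_real_add complex_norm_square)
  moreover have "of_real (2 * Re (c GY * cnj (c GZ))) = c GY * cnj (c GZ) + c GZ * cnj (c GY)"
    by (simp only: complex_add_cnj [symmetric]) simp
  ultimately show ?thesis
    using assms by (simp add: UNIV_gen algebra_simps)
qed

lemma sum_coeff_pairs_unitary:
  fixes F :: "'a \<Rightarrow> complex" and c :: "gen \<Rightarrow> complex"
  assumes "unitarity_conditions c" and "\<And>d. q d d = r"
    and "q GZ GX = q GX GY" and "q GX GZ = q GY GX" and "q GZ GY = q GY GZ"
  shows "(\<Sum>i\<in>UNIV. \<Sum>j\<in>UNIV. c i * cnj (c j) * F (q i j)) = F r"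
proof -
  have norm: "(cmod (c GX))\<^sup>2 + (cmod (c GY))\<^sup>2 + (cmod (c GZ))\<^sup>2 = 1"
    and cross: "c GX * cnj (c GY) + c GZ * cnj (c GX) = 0"
    and yz: "Re (c GY * cnj (c GZ)) = 0"
    using assms(1) by (simp_all only: unitarity_conditions_def)
  show ?thesis
    unfolding sum_coeff_pairs_collect[OF assms(2-)] norm cross yz by simp
qed

fun phase_form :: "real \<Rightarrow> int \<Rightarrow> gen \<Rightarrow> complex" where
  "phase_form \<phi> q GX = of_real (cos \<phi>)"
| "phase_form \<phi> q GY = (1 + \<i> * (-1) powi q) / 2 * of_real (sin \<phi>)"
| "phase_form \<phi> q GZ = - ((1 - \<i> * (-1) powi q) / 2) * of_real (sin \<phi>)"

lemma unitarity_conditions_mult_phase: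
  assumes "cmod \<omega> = 1"
  shows "unitarity_conditions (\<lambda>d. \<omega> * c d) \<longleftrightarrow> unitarity_conditions c"
proof -
  have "(\<omega> * a) * cnj (\<omega> * b) = a * cnj b" for a b
  proof -
    have "\<omega> * cnj \<omega> = 1"
      using complex_norm_square[of \<omega>] assms by simp
    then show ?thesis
      by (metis (no_types, lifting) complex_cnj_mult mult.left_commute mult.assoc mult_1)
  qed
  then show ?thesis
    by (simp only: unitarity_conditions_def norm_mult assms mult_1_left)
qed

lemma unitarity_conditions_phase_form: "unitarity_conditions (phase_form \<phi> q)"
proof -
  have "(-1::complex) powi q = 1 \<or> (-1::complex) powi q = -1"
    by (cases "even q") simp_all
  then show ?thesis
    unfolding unitarity_conditions_def cmod_power2
    by (auto simp: power2_eq_square field_simps) (use sin_cos_squared_add3[of \<phi>] in linarith)+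
qed

lemma phase_form_if_unitarity_conditions:
  assumes "unitarity_conditions c" and "c GX = of_real r" and "r > 0"
  shows "\<exists>\<phi> q. \<forall>d. c d = phase_form \<phi> q d"
proof -
  define u where "u = c GY"
  have z: "c GZ = - cnj u"
  proof -
    have "of_real r * (cnj u + c GZ) = 0"
      using assms(1,2) by (simp add: unitarity_conditions_def u_def algebra_simps)
    then show ?thesis
      using assms(3) by (simp add: add_eq_0_iff)
  qed
  have "(Re u)\<^sup>2 = (Im u)\<^sup>2"
    using assms(1) by (simp add: unitarity_conditions_def z u_def power2_eq_square)
  then have im: "Im u = Re u \<or> Im u = - Re u"
    by (metis power2_eq_iff)
  have "r\<^sup>2 + 2 * ((Re u)\<^sup>2 + (Im u)\<^sup>2) = 1"
    using assms(1,2) by (simp add: unitarity_conditions_def z u_def cmod_power2)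
  then have "r\<^sup>2 + (2 * Re u)\<^sup>2 = 1"
    using im by (auto simp: power2_eq_square)
  then obtain \<phi> where r: "r = cos \<phi>" and re: "2 * Re u = sin \<phi>"
    using sincos_total_2pi by metis
  have "\<exists>q::int. u = (1 + \<i> * (-1) powi q) / 2 * of_real (sin \<phi>) \<and>
      - cnj u = - ((1 - \<i> * (-1) powi q) / 2) * of_real (sin \<phi>)"
    using im
  proof
    assume "Im u = Re u"
    then show ?thesis
      using re by (intro exI[of _ 0]) (simp add: complex_eq_iff)
  next
    assume "Im u = - Re u"
    then show ?thesis
      using re by (intro exI[of _ 1]) (simp add: complex_eq_iff)
  qed
  then show ?thesis
    using assms(2) r z by (auto simp: all_gen u_def)
qed

lemma unitarity_conditions_iff_phase_form:
  assumes "c GX \<noteq> 0"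
  shows "unitarity_conditions c \<longleftrightarrow>
    (\<exists>\<omega> \<phi> q. cmod \<omega> = 1 \<and> (\<forall>d. c d = \<omega> * phase_form \<phi> q d))"
proof
  assume c: "unitarity_conditions c"
  define \<omega> where "\<omega> = c GX / of_real (cmod (c GX))"
  have \<omega>: "cmod \<omega> = 1" "cmod (cnj \<omega>) = 1" "\<omega> * cnj \<omega> = 1"
    using assms by (simp_all add: \<omega>_def norm_divide complex_norm_square [symmetric] power2_eq_square)
  have "unitarity_conditions (\<lambda>d. cnj \<omega> * c d)"
    using c unitarity_conditions_mult_phase[OF \<omega>(2)] by simp
  moreover have "cnj \<omega> * c GX = of_real (cmod (c GX))"
    using assms complex_norm_square[of "c GX"]
    by (simp add: \<omega>_def field_simps power2_eq_square)
  ultimately obtain \<phi> q where "\<forall>d. cnj \<omega> * c d = phase_form \<phi> q d"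
    using phase_form_if_unitarity_conditions assms by (metis zero_less_norm_iff)
  then have "\<forall>d. c d = \<omega> * phase_form \<phi> q d"
    using \<omega>(3) by (metis mult.assoc mult_1)
  with \<omega>(1) show "\<exists>\<omega> \<phi> q. cmod \<omega> = 1 \<and> (\<forall>d. c d = \<omega> * phase_form \<phi> q d)"
    by blast
next
  assume "\<exists>\<omega> \<phi> q. cmod \<omega> = 1 \<and> (\<forall>d. c d = \<omega> * phase_form \<phi> q d)"
  then obtain \<omega> \<phi> q where "cmod \<omega> = 1" and "c = (\<lambda>d. \<omega> * phase_form \<phi> q d)"
    by blast
  then show "unitarity_conditions c"
    using unitarity_conditions_mult_phase unitarity_conditions_phase_form by simp
qed

locale presented_Gamma =
  fixes G :: "('a, 'b) monoid_scheme" (structure) and v :: "gen \<Rightarrow> 'a"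
  assumes presents: "presents G v"
begin

sublocale group G
  using presents by (simp add: presents_def)

abbreviation "X \<equiv> v GX"
abbreviation "Y \<equiv> v GY"
abbreviation "Z \<equiv> v GZ"

lemma generator_closed [simp]: "v d \<in> carrier G"
  using presents unfolding presents_def by blast

lemma eval_word_neq_if_weight_neq:
  assumes "word_weight w mod 4 \<noteq> word_weight w' mod 4"
  shows "eval_word G v w \<noteq> eval_word G v w'"
  using assms presents word_equiv_word_weight_mod4 unfolding presents_def by blast

lemma eval_relator:
  assumes "r \<in> relators"
  shows "eval_word G v r = \<one>"
proof -
  have "red_step ([] @ r @ []) ([] @ [])"
    using assms by (rule red_step.rel)
  then have "word_equiv r []"
    by (simp add: word_equiv_def r_into_rtranclp)
  then have "eval_word G v r = eval_word G v []"
    using presents unfolding presents_def by blast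
  then show ?thesis
    by (simp add: eval_word_def)
qed

lemma relation_x: "X \<otimes> inv Y \<otimes> X \<otimes> inv Z = \<one>"
  using eval_relator[of "[(GX,False),(GY,True),(GX,False),(GZ,True)]"]
  by (simp add: relators_def eval_word_def eval_letter_def m_assoc)

lemma relation_y: "Y \<otimes> inv Z \<otimes> Y \<otimes> inv Z = \<one>"
  using eval_relator[of "[(GY,False),(GZ,True),(GY,False),(GZ,True)]"]
  by (simp add: relators_def eval_word_def eval_letter_def m_assoc)

lemma right_quotients:
  "Z \<otimes> inv X = X \<otimes> inv Y"
  "X \<otimes> inv Z = inv (X \<otimes> inv Y)"
  "Y \<otimes> inv X = inv (X \<otimes> inv Y)"
  "Z \<otimes> inv Y = Y \<otimes> inv Z"
proof -
  have x: "(X \<otimes> inv Y) \<otimes> (X \<otimes> inv Z) = \<one>" and y: "(Y \<otimes> inv Z) \<otimes> (Y \<otimes> inv Z) = \<one>"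
    using relation_x relation_y by (simp_all add: m_assoc)
  show "Z \<otimes> inv X = X \<otimes> inv Y"
    using inv_equality[OF x] by (simp add: inv_mult_group)
  show "X \<otimes> inv Z = inv (X \<otimes> inv Y)"
    using inv_equality[OF inv_comm[OF x]] by simp
  show "Y \<otimes> inv X = inv (X \<otimes> inv Y)"
    by (simp add: inv_mult_group)
  show "Z \<otimes> inv Y = Y \<otimes> inv Z"
    using inv_equality[OF y] by (simp add: inv_mult_group)
qed

lemma left_quotients:
  "inv Z \<otimes> X = inv X \<otimes> Y"
  "inv X \<otimes> Z = inv Y \<otimes> X"
  "inv Z \<otimes> Y = inv Y \<otimes> Z"
proof -
  have "(inv Y \<otimes> X \<otimes> inv Z) \<otimes> X = \<one>" and "(inv Z \<otimes> Y \<otimes> inv Z) \<otimes> Y = \<one>"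
    using inv_comm[of X "inv Y \<otimes> X \<otimes> inv Z"] inv_comm[of Y "inv Z \<otimes> Y \<otimes> inv Z"]
      relation_x relation_y
    by (simp_all add: m_assoc)
  then have x: "(inv Y \<otimes> X) \<otimes> (inv Z \<otimes> X) = \<one>" and y: "(inv Z \<otimes> Y) \<otimes> (inv Z \<otimes> Y) = \<one>"
    by (simp_all add: m_assoc)
  show "inv Z \<otimes> X = inv X \<otimes> Y"
    using inv_equality[OF inv_comm[OF x]] by (simp add: inv_mult_group)
  show "inv X \<otimes> Z = inv Y \<otimes> X"
    using inv_equality[OF x] by (simp add: inv_mult_group)
  show "inv Z \<otimes> Y = inv Y \<otimes> Z"
    using inv_equality[OF y] by (simp add: inv_mult_group)
qed

lemma distinct_right_quotients: "distinct [\<one>, X \<otimes> inv Y, inv (X \<otimes> inv Y), Y \<otimes> inv Z]"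
proof -
  have words: "eval_word G v [] = \<one>"
    "eval_word G v [(GX,False),(GY,True)] = X \<otimes> inv Y"
    "eval_word G v [(GY,False),(GX,True)] = inv (X \<otimes> inv Y)"
    "eval_word G v [(GY,False),(GZ,True)] = Y \<otimes> inv Z"
    by (simp_all add: eval_word_def eval_letter_def inv_mult_group)
  have "distinct [eval_word G v [], eval_word G v [(GX,False),(GY,True)],
      eval_word G v [(GY,False),(GX,True)], eval_word G v [(GY,False),(GZ,True)]]"
    by (simp add: eval_word_neq_if_weight_neq word_weight_def letter_weight_def)
  then show ?thesis
    unfolding words .
qed

lemma walk_op_eq_translate_sum: "walk_op G v c = translate_sum G UNIV c (\<lambda>d. inv (v d))"
  by (simp add: fun_eq_iff walk_op_def shift_op_def translate_sum_def UNIV_gen)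

lemma in_l2_walk_op: "in_l2 G f \<Longrightarrow> in_l2 G (walk_op G v c f)"
  unfolding walk_op_eq_translate_sum by (rule in_l2_translate_sum) auto

lemma walk_isometric_iff:
  "(\<forall>f. in_l2 G f \<longrightarrow> l2_norm G (walk_op G v c f) = l2_norm G f) \<longleftrightarrow> unitarity_conditions c"
proof -
  define A where "A = (cmod (c GX))\<^sup>2 + (cmod (c GY))\<^sup>2 + (cmod (c GZ))\<^sup>2"
  define B where "B = c GX * cnj (c GY) + c GZ * cnj (c GX)"
  define D where "D = 2 * Re (c GY * cnj (c GZ))"
  let ?a = "X \<otimes> inv Y" and ?e = "Y \<otimes> inv Z"
  have "l2_norm G (walk_op G v c f) = l2_norm G f \<longleftrightarrow>
      Re (of_real A * autocorr G f \<one> + B * autocorr G f ?a + cnj B * autocorr G f (inv ?a)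
        + of_real D * autocorr G f ?e) = Re (autocorr G f \<one>)" if "in_l2 G f" for f
  proof -
    have "(\<Sum>i\<in>UNIV. \<Sum>j\<in>UNIV. c i * cnj (c j) * autocorr G f (inv (inv (v i)) \<otimes> inv (v j))) =
        of_real A * autocorr G f \<one> + B * autocorr G f ?a + cnj B * autocorr G f (inv ?a)
        + of_real D * autocorr G f ?e"
      using sum_coeff_pairs_collect[where q = "\<lambda>i j. v i \<otimes> inv (v j)" and r = \<one>]
      by (simp add: A_def B_def D_def right_quotients)
    then show ?thesis
      using that
      by (simp add: walk_op_eq_translate_sum l2_norm_translate_sum l2_norm_eq_autocorr
          image_subset_iff)
  qed
  then have "(\<forall>f. in_l2 G f \<longrightarrow> l2_norm G (walk_op G v c f) = l2_norm G f) \<longleftrightarrow>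
    (\<forall>f. in_l2 G f \<longrightarrow> Re (of_real A * autocorr G f \<one> + B * autocorr G f ?a
      + cnj B * autocorr G f (inv ?a) + of_real D * autocorr G f ?e) = Re (autocorr G f \<one>))"
    by auto
  also have "(\<forall>f. in_l2 G f \<longrightarrow> Re (of_real A * autocorr G f \<one> + B * autocorr G f ?a
      + cnj B * autocorr G f (inv ?a) + of_real D * autocorr G f ?e) = Re (autocorr G f \<one>))
    \<longleftrightarrow> A = 1 \<and> B = 0 \<and> D = 0"
    using relation_y distinct_right_quotients by (intro autocorr_form_eq_norm_iff) (simp_all add: m_assoc)
  finally show ?thesis
    by (auto simp: unitarity_conditions_def A_def B_def D_def)
qed

lemma walk_surjective:
  assumes "unitarity_conditions c" and "in_l2 G g"
  shows "\<exists>f. in_l2 G f \<and> walk_op G v c f = g"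
proof (intro exI conjI)
  let ?f = "translate_sum G UNIV (\<lambda>d. cnj (c d)) v g"
  show "in_l2 G ?f"
    using assms(2) by (intro in_l2_translate_sum) auto
  have "walk_op G v c ?f h = g h" if "h \<in> carrier G" for h
  proof -
    have "walk_op G v c ?f h = (\<Sum>i\<in>UNIV. \<Sum>j\<in>UNIV. c i * cnj (c j) * g (h \<otimes> (inv (v i) \<otimes> v j)))"
      using that by (simp add: walk_op_eq_translate_sum translate_sum_translate_sum image_subset_iff)
    also have "\<dots> = g (h \<otimes> \<one>)"
      using assms(1) by (rule sum_coeff_pairs_unitary) (simp_all add: left_quotients)
    finally show ?thesis
      using that by simp
  qed
  moreover have "walk_op G v c ?f h = g h" if "h \<notin> carrier G" for h
    using assms(2) that by (simp add: walk_op_eq_translate_sum translate_sum_def in_l2_def)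
  ultimately show "walk_op G v c ?f = g"
    by blast
qed

lemma unitary_walk_op_iff: "unitary_l2 G (walk_op G v c) \<longleftrightarrow> unitarity_conditions c"
proof
  assume "unitary_l2 G (walk_op G v c)"
  then show "unitarity_conditions c"
    unfolding unitary_l2_def walk_isometric_iff [symmetric] by simp
next
  assume c: "unitarity_conditions c"
  show "unitary_l2 G (walk_op G v c)"
    unfolding unitary_l2_def
    using in_l2_walk_op c [folded walk_isometric_iff] walk_surjective [OF c] by simp
qed

end

theorem mainTheorem5:
  fixes G :: "('a, 'b) monoid_scheme" and v :: "gen \<Rightarrow> 'a"
  assumes "presents G v"
  shows "(\<forall>c. homog_scalar_qw G v c \<longleftrightarrow>
            ((\<forall>d. c d \<noteq> 0) \<and>
             (\<exists>\<omega> (\<phi>::real) (q::int). cmod \<omega> = 1 \<and>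
                c GX = \<omega> * complex_of_real (cos \<phi>) \<and>
                c GY = \<omega> * ((1 + \<i> * (-1) powi q) / 2 * complex_of_real (sin \<phi>)) \<and>
                c GZ = \<omega> * (- ((1 - \<i> * (-1) powi q) / 2) * complex_of_real (sin \<phi>)))))
         \<and> (\<exists>c. homog_scalar_qw G v c)"
proof -
  interpret presented_Gamma G v
    by (rule presented_Gamma.intro) (fact assms)
  have iff: "homog_scalar_qw G v c \<longleftrightarrow> (\<forall>d. c d \<noteq> 0) \<and>
      (\<exists>\<omega> \<phi> q. cmod \<omega> = 1 \<and> (\<forall>d. c d = \<omega> * phase_form \<phi> q d))" for c
    unfolding homog_scalar_qw_def unitary_walk_op_iff
    by (intro conj_cong refl unitarity_conditions_iff_phase_form) simp
  have "homog_scalar_qw G v (phase_form (pi / 4) 0)"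
    unfolding iff
    by (intro conjI exI[of _ 1] exI[of _ "pi / 4"] exI[of _ 0])
      (simp_all add: all_gen cos_45 sin_45 complex_eq_iff)
  then have "\<exists>c. homog_scalar_qw G v c"
    by blast
  then show ?thesis
    by (simp only: iff all_gen phase_form.simps simp_thms)
qed

end
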